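(* In the setting described in the context, $A^3A^*-[3]_qA^2A^*A+[3]_qAA^*A^2-A^*A^3=0$, $A^{*3}A-[3]_qA^{*2}AA^*+[3]_qA^*AA^{*2}-AA^{*3}=0$, $B^3B^*-[3]_qB^2B^*B+[3]_qBB^*B^2-B^*B^3=0$, $B^{*3}B-[3]_qB^{*2}BB^*+[3]_qB^*BB^{*2}-BB^{*3}=0$.
   Context: $\mathbb K$ is an algebraically closed field, $q\in\mathbb K$ nonzero and not a root of unity, $[3]_q=\frac{q^3-q^{-3}}{q-q^{-1}}$, $V$ a nonzero finite-dimensional $\mathbb K$-vector space. A tridiagonal pair on $V$ is an ordered pair $A,A^*$ of linear maps $V\to V$ such that: (i) each of $A,A^*$ is diagonalizable; (ii) there is an ordering $V_0,\dots,V_d$ of the eigenspaces of $A$ with $A^*V_i\subseteq V_{i-1}+V_i+V_{i+1}$ ($V_{-1}=V_{d+1}=0$); (iii) there is an ordering $V^*_0,\dots,V^*_\delta$ of the eigenspaces of $A^*$ with $AV^*_i\subseteq V^*_{i-1}+V^*_i+V^*_{i+1}$ ($V^*_{-1}=V^*_{\delta+1}=0$); (iv) no subspace $W\ne0,V$ satisfies $AW\subseteq W$, $A^*W\subseteq W$. It is known $d=\delta$; orderings as in (ii),(iii) are called standard. Setting: $A,A^*$ is a tridiagonal pair on $V$; $V_0,\dots,V_d$ (resp. $V^*_0,\dots,V^*_d$) is a standard ordering of the eigenspaces of $A$ (resp. $A^*$); the eigenvalue of $A$ on $V_i$ is $aq^{2i-d}$ and that of $A^*$ on $V^*_i$ is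 $a^*q^{d-2i}$ for some nonzero $a,a^*\in\mathbb K$; $b,b^*\in\mathbb K$ are nonzero. For $0\le i\le d$ the subspaces $(V^*_0+\cdots+V^*_i)\cap(V_0+\cdots+V_{d-i})$ form a decomposition of $V$ (nonzero, direct sum equal to $V$), as do the subspaces $(V^*_{d-i}+\cdots+V^*_d)\cap(V_i+\cdots+V_d)$. $B$ is the linear map acting as $bq^{2i-d}I$ on $(V^*_0+\cdots+V^*_i)\cap(V_0+\cdots+V_{d-i})$, and $B^*$ is the linear map acting as $b^*q^{d-2i}I$ on $(V^*_{d-i}+\cdots+V^*_d)\cap(V_i+\cdots+V_d)$, for each $i$. *)

theory Defs
  imports Main "HOL-Computational_Algebra.Polynomial"
begin

text \<open>Vector spaces are modelled abstractly: the whole type 'v is the space V,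
  with scalar multiplication s :: 'a \<Rightarrow> 'v \<Rightarrow> 'v over the field 'a.\<close>

definition alg_closed :: "'a::field itself \<Rightarrow> bool" where
  "alg_closed _ \<longleftrightarrow> (\<forall>p :: 'a poly. 0 < degree p \<longrightarrow> (\<exists>x. poly p x = 0))"

definition qint3 :: "'a::field \<Rightarrow> 'a" where
  "qint3 q = (q ^ 3 - inverse q ^ 3) / (q - inverse q)"

definition ssum :: "(nat \<Rightarrow> 'v::ab_group_add set) \<Rightarrow> nat set \<Rightarrow> 'v set" where
  "ssum W I = {\<Sum>i\<in>I. f i | f. \<forall>i\<in>I. f i \<in> W i}"

definition eigenspace :: "('a \<Rightarrow> 'v::ab_group_add \<Rightarrow> 'v) \<Rightarrow> ('v \<Rightarrow> 'v) \<Rightarrow> 'a \<Rightarrow> 'v set" where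
  "eigenspace s A \<theta> = {v. A v = s \<theta> v}"

definition is_eigenvalue :: "('a \<Rightarrow> 'v::ab_group_add \<Rightarrow> 'v) \<Rightarrow> ('v \<Rightarrow> 'v) \<Rightarrow> 'a \<Rightarrow> bool" where
  "is_eigenvalue s A \<theta> \<longleftrightarrow> (\<exists>v. v \<noteq> 0 \<and> A v = s \<theta> v)"

definition diagonalizable :: "('a::field \<Rightarrow> 'v::ab_group_add \<Rightarrow> 'v) \<Rightarrow> ('v \<Rightarrow> 'v) \<Rightarrow> bool" where
  "diagonalizable s A \<longleftrightarrow> module.span s {v. \<exists>\<theta>. A v = s \<theta> v} = UNIV"

text \<open>th 0, ..., th d is an ordering of the (distinct) eigenvalues of A, with
  eigenspaces V_i = eigenspace s A (th i), such that
  As V_i \<subseteq> V_(i-1) + V_i + V_(i+1) (with V_(-1) = V_(d+1) = 0).\<close>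
definition standard_ordering ::
  "('a::field \<Rightarrow> 'v::ab_group_add \<Rightarrow> 'v) \<Rightarrow> ('v \<Rightarrow> 'v) \<Rightarrow> ('v \<Rightarrow> 'v) \<Rightarrow> nat \<Rightarrow> (nat \<Rightarrow> 'a) \<Rightarrow> bool" where
  "standard_ordering s A As d th \<longleftrightarrow>
     inj_on th {..d} \<and> {\<theta>. is_eigenvalue s A \<theta>} = th ` {..d} \<and>
     (\<forall>i\<le>d. \<forall>v\<in>eigenspace s A (th i).
        As v \<in> ssum (\<lambda>j. eigenspace s A (th j)) {j. j \<le> d \<and> i \<le> j + 1 \<and> j \<le> i + 1})"

definition tridiagonal_pair ::
  "('a::field \<Rightarrow> 'v::ab_group_add \<Rightarrow> 'v) \<Rightarrow> ('v \<Rightarrow> 'v) \<Rightarrow> ('v \<Rightarrow> 'v) \<Rightarrow> bool" where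
  "tridiagonal_pair s A As \<longleftrightarrow>
     Vector_Spaces.linear s s A \<and> Vector_Spaces.linear s s As \<and>
     diagonalizable s A \<and> diagonalizable s As \<and>
     (\<exists>d th. standard_ordering s A As d th) \<and>
     (\<exists>\<delta> th. standard_ordering s As A \<delta> th) \<and>
     (\<forall>W. module.subspace s W \<and> A ` W \<subseteq> W \<and> As ` W \<subseteq> W \<longrightarrow> W = {0} \<or> W = UNIV)"

definition decomposition ::
  "('a::field \<Rightarrow> 'v::ab_group_add \<Rightarrow> 'v) \<Rightarrow> (nat \<Rightarrow> 'v set) \<Rightarrow> nat \<Rightarrow> bool" where
  "decomposition s W d \<longleftrightarrow>
     (\<forall>i\<le>d. module.subspace s (W i) \<and> W i \<noteq> {0}) \<and>
     ssum W {..d} = UNIV \<and>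
     (\<forall>f. (\<forall>i\<le>d. f i \<in> W i) \<and> (\<Sum>i\<le>d. f i) = 0 \<longrightarrow> (\<forall>i\<le>d. f i = 0))"

end

theory Submission
  imports Defs
begin

text \<open>
  Let T act on subspaces X_0, ..., X_d spanning V by scalars t_i with t_(i+1) = r t_i, and let M
  map X_i into X_(i-1) + X_i + X_(i+1). On X_i the Serre expression in T and M equals p(T) M, where
  p is the cubic with roots t_(i-1), t_i, t_(i+1); for r = q^2 or r = q^-2 its coefficients are
  those of the q-Serre relation, so the relation holds on every X_i and hence on V.

  For A and A* this is tridiagonality. For B and B* one first reads off from the decompositions
  the relations q^-1 B A - q A B = (q^-1 - q) a b I and q B A* - q^-1 A* B = (q - q^-1) a* b I.
  They force B to lower the indices of the eigenspaces of A and of A* by at most one, so B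
  preserves the two flags whose intersections are its eigenspaces, while B* moves each flag up by
  one step. A component of B* u (u a B-eigenvector) in a B-eigenspace that is not adjacent would
  then lie in two different B-eigenspaces. Reversing both standard orderings and replacing q by
  q^-1 exchanges the two decompositions together with the roles of B and B*, so every fact about
  B yields the corresponding fact about B*.
\<close>

lemma power_int_inj:
  fixes q :: "'a::field"
  assumes q0: "q \<noteq> 0" and not_root: "\<forall>n::nat. 0 < n \<longrightarrow> q ^ n \<noteq> 1"
  shows "q powi k = q powi l \<longleftrightarrow> k = l"
proof
  assume "q powi k = q powi l"
  then have "q powi (k - l) = 1" and "q powi (l - k) = 1"
    using q0 by (simp_all add: power_int_diff)
  then have "q ^ nat (k - l) = 1" and "q ^ nat (l - k) = 1"
    by (simp_all add: power_int_def split: if_splits)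
  with not_root have "nat (k - l) = 0" and "nat (l - k) = 0" by (metis neq0_conv)+
  then show "k = l" by simp
qed simp

lemma power_int_inverse_neg: "inverse (q :: 'a::field) powi k = q powi (- k)"
  by (simp only: power_int_inverse power_int_minus)

lemma power_int_reflect:
  fixes q :: "'a::field"
  assumes "i \<le> d"
  shows "inverse q powi (2 * int i - int d) = q powi (2 * int (d - i) - int d)"
    and "inverse q powi (int d - 2 * int i) = q powi (int d - 2 * int (d - i))"
  using assms by (simp_all add: power_int_inverse_neg of_nat_diff algebra_simps)

lemma power_int_reflect_mult:
  fixes q :: "'a::field"
  assumes "q \<noteq> 0" and "i \<le> d"
  shows "q powi (2 * int (d - i) - int d) * q powi (2 * int i - int d) = 1"
    and "q powi (int d - 2 * int i) * q powi (2 * int i - int d) = 1"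
  using assms by (simp_all add: of_nat_diff flip: power_int_add)

lemma power_int_step:
  fixes q :: "'a::field"
  assumes "q \<noteq> 0"
  shows "q powi (2 * int (Suc i) - int d) = q\<^sup>2 * q powi (2 * int i - int d)"
    and "q powi (int d - 2 * int i) = q\<^sup>2 * q powi (int d - 2 * int (Suc i))"
    and "inverse q * q powi k = q * q powi (k - 2)"
    and "q * q powi k = inverse q * q powi (k + 2)"
  using assms by (simp_all add: power_int_add power_int_diff field_simps power2_eq_square)

lemma qint3_eq:
  fixes q :: "'a::field"
  assumes "q \<noteq> 0" and "q\<^sup>2 \<noteq> 1"
  shows "qint3 q = q\<^sup>2 + 1 + inverse (q\<^sup>2)"
proof -
  have "q - inverse q \<noteq> 0"
    using assms by (auto simp: power2_eq_square field_simps)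
  moreover have "q ^ 3 - inverse q ^ 3 = (q - inverse q) * (q\<^sup>2 + 1 + inverse (q\<^sup>2))"
    using assms(1) by (simp add: field_simps power2_eq_square power3_eq_cube)
  ultimately show ?thesis by (simp add: qint3_def)
qed

lemma qint3_inverse: "qint3 (inverse q) = qint3 q"
  unfolding qint3_def inverse_inverse_eq by (metis minus_diff_eq minus_divide_divide)

lemma cubic_with_ratio_roots:
  fixes r \<theta> \<tau> :: "'a::field"
  assumes "r \<noteq> 0" and "\<tau> = \<theta> \<or> \<tau> = r * \<theta> \<or> \<theta> = r * \<tau>"
  shows "\<tau> ^ 3 - (r + 1 + inverse r) * \<theta> * \<tau>\<^sup>2 + (r + 1 + inverse r) * \<theta>\<^sup>2 * \<tau> - \<theta> ^ 3 = 0"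
proof -
  have "\<tau> ^ 3 - (r + 1 + inverse r) * \<theta> * \<tau>\<^sup>2 + (r + 1 + inverse r) * \<theta>\<^sup>2 * \<tau> - \<theta> ^ 3
      = (\<tau> - \<theta>) * (\<tau> - r * \<theta>) * (r * \<tau> - \<theta>) / r"
    using assms(1) by (simp add: field_simps power2_eq_square power3_eq_cube)
  then show ?thesis using assms(2) by auto
qed

definition q_serre ::
  "('a::field \<Rightarrow> 'v::ab_group_add \<Rightarrow> 'v) \<Rightarrow> 'a \<Rightarrow> ('v \<Rightarrow> 'v) \<Rightarrow> ('v \<Rightarrow> 'v) \<Rightarrow> 'v \<Rightarrow> 'v" where
  "q_serre s k T M v =
     T (T (T (M v))) - s k (T (T (M (T v)))) + s k (T (M (T (T v)))) - M (T (T (T v)))"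

lemma mem_ssum_iff: "x \<in> ssum W I \<longleftrightarrow> (\<exists>f. x = (\<Sum>i\<in>I. f i) \<and> (\<forall>i\<in>I. f i \<in> W i))"
  by (auto simp: ssum_def)

lemma ssum_empty [simp]: "ssum W {} = {0}"
  by (simp add: ssum_def)

lemma ssum_cong: "(\<And>i. i \<in> I \<Longrightarrow> W i = W' i) \<Longrightarrow> ssum W I = ssum W' I"
  by (simp add: ssum_def)

lemma ssum_reindex:
  assumes "inj_on h I"
  shows "ssum W (h ` I) = ssum (\<lambda>i. W (h i)) I"
proof
  show "ssum W (h ` I) \<subseteq> ssum (\<lambda>i. W (h i)) I"
    using assms by (fastforce simp: ssum_def sum.reindex)
  show "ssum (\<lambda>i. W (h i)) I \<subseteq> ssum W (h ` I)"
  proof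
    fix x assume "x \<in> ssum (\<lambda>i. W (h i)) I"
    then obtain g where x: "x = (\<Sum>i\<in>I. g i)" and g: "\<forall>i\<in>I. g i \<in> W (h i)"
      by (auto simp: ssum_def)
    define f where "f = g \<circ> the_inv_into I h"
    have "x = (\<Sum>j\<in>h ` I. f j)"
      using assms by (simp add: x sum.reindex f_def the_inv_into_f_f)
    moreover have "\<forall>j\<in>h ` I. f j \<in> W j"
      using assms g by (auto simp: f_def the_inv_into_f_f)
    ultimately show "x \<in> ssum W (h ` I)" by (auto simp: ssum_def)
  qed
qed

lemma image_reflect:
  fixes d :: nat
  assumes "J \<subseteq> {..d}"
  shows "(-) d ` J = {i. i \<le> d \<and> d - i \<in> J}"
proof (intro equalityI subsetI)
  fix i assume "i \<in> {i. i \<le> d \<and> d - i \<in> J}"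
  then show "i \<in> (-) d ` J" by (intro image_eqI[of _ _ "d - i"]) auto
qed (use assms in auto)

lemma ssum_reflect:
  fixes d :: nat
  assumes "J \<subseteq> {..d}" and W': "\<And>j. j \<le> d \<Longrightarrow> W' j = W (d - j)"
  shows "ssum W' J = ssum W {i. i \<le> d \<and> d - i \<in> J}"
proof -
  have "inj_on ((-) d) J"
    by (intro inj_onI) (metis assms(1) atMost_iff diff_diff_cancel subsetD)
  then have "ssum W ((-) d ` J) = ssum W' J"
    using assms by (auto simp: ssum_reindex intro!: ssum_cong)
  then show ?thesis using image_reflect[OF assms(1)] by simp
qed

lemma ssum_reflect_flags:
  fixes d :: nat
  assumes W': "\<And>j. j \<le> d \<Longrightarrow> W' j = W (d - j)" and "m \<le> d"
  shows "ssum W' {m..d} = ssum W {..d - m}" and "ssum W' {..m} = ssum W {d - m..d}"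
proof -
  have "{i. i \<le> d \<and> d - i \<in> {m..d}} = {..d - m}" and "{i. i \<le> d \<and> d - i \<in> {..m}} = {d - m..d}"
    using \<open>m \<le> d\<close> by auto
  then show "ssum W' {m..d} = ssum W {..d - m}" and "ssum W' {..m} = ssum W {d - m..d}"
    using ssum_reflect[of "{m..d}" d W' W] ssum_reflect[of "{..m}" d W' W] W' \<open>m \<le> d\<close> by auto
qed

lemma decomposition_cong:
  assumes "\<And>i. i \<le> d \<Longrightarrow> U i = U' i"
  shows "decomposition s U d \<longleftrightarrow> decomposition s U' d"
proof -
  have "ssum U {..d} = ssum U' {..d}" by (rule ssum_cong) (simp add: assms)
  then show ?thesis unfolding decomposition_def by (simp add: assms)
qed

lemma standard_ordering_tridiagonal:
  assumes "standard_ordering s M T d th" and "i \<le> d" and "v \<in> eigenspace s M (th i)"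
  shows "T v \<in> ssum (\<lambda>j. eigenspace s M (th j)) {j. j \<le> d \<and> i \<le> j + 1 \<and> j \<le> i + 1}"
  using assms unfolding standard_ordering_def by blast

lemma standard_ordering_eigenvalue:
  assumes "standard_ordering s M T d th" and "M v = s \<mu> v" and "v \<noteq> 0"
  shows "\<exists>i\<le>d. \<mu> = th i"
proof -
  have "\<mu> \<in> th ` {..d}"
    using assms unfolding standard_ordering_def is_eigenvalue_def by blast
  then show ?thesis by auto
qed

lemma standard_ordering_reverse:
  assumes ord: "standard_ordering s M T d th" and th': "\<And>i. i \<le> d \<Longrightarrow> th' i = th (d - i)"
  shows "standard_ordering s M T d th'"
  unfolding standard_ordering_def
proof (intro conjI ballI allI impI)
  have "th' ` {..d} = th ` ((-) d ` {..d})" by (auto simp: th' image_image)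
  also have "(-) d ` {..d} = {..d}" by (subst image_reflect) auto
  finally show "{\<theta>. is_eigenvalue s M \<theta>} = th' ` {..d}"
    using ord by (simp add: standard_ordering_def)
  show "inj_on th' {..d}"
  proof (rule inj_onI)
    fix x y assume "x \<in> {..d}" "y \<in> {..d}" "th' x = th' y"
    then have "d - x = d - y" using ord by (auto simp: standard_ordering_def inj_on_def th')
    then show "x = y" using \<open>x \<in> {..d}\<close> \<open>y \<in> {..d}\<close> by simp
  qed
  fix i v assume i: "i \<le> d" and v: "v \<in> eigenspace s M (th' i)"
  let ?N = "\<lambda>i. {j. j \<le> d \<and> i \<le> j + 1 \<and> j \<le> i + 1}"
  have "v \<in> eigenspace s M (th (d - i))" using v th'[OF i] by simp
  then have "T v \<in> ssum (\<lambda>j. eigenspace s M (th j)) (?N (d - i))"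
    using ord diff_le_self unfolding standard_ordering_def by blast
  also have "?N (d - i) = {j. j \<le> d \<and> d - j \<in> ?N i}"
    using i by auto
  also have "ssum (\<lambda>j. eigenspace s M (th j)) \<dots> = ssum (\<lambda>j. eigenspace s M (th' j)) (?N i)"
    by (rule ssum_reflect[symmetric]) (auto simp: th')
  finally show "T v \<in> ssum (\<lambda>j. eigenspace s M (th' j)) (?N i)" .
qed

context vector_space
begin

interpretation vector_space_pair scale scale ..

lemma subspace_kernel_additive:
  assumes "\<And>x y. F (x + y) = F x + F y" and "\<And>c x. F (c *s x) = c *s F x"
  shows "subspace {x. F x = 0}"
  using assms assms(2)[of 0 0] unfolding subspace_def by auto

lemma subspace_eigenspace:
  "Vector_Spaces.linear scale scale M \<Longrightarrow> subspace (eigenspace scale M \<theta>)"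
  unfolding eigenspace_def
  by (rule subspace_kernel_additive[where F = "\<lambda>v. M v - \<theta> *s v", simplified])
    (simp_all add: linear_add linear_scale scale_right_distrib scale_right_diff_distrib scale_left_commute)

lemma subspace_ssum:
  assumes "\<And>i. i \<in> I \<Longrightarrow> subspace (W i)"
  shows "subspace (ssum W I)"
  unfolding subspace_def
proof (intro conjI ballI allI)
  show "0 \<in> ssum W I" unfolding mem_ssum_iff
    by (rule exI[of _ "\<lambda>_. 0"]) (auto simp: subspace_0 assms)
next
  fix x y assume "x \<in> ssum W I" "y \<in> ssum W I"
  then obtain f g where f: "x = (\<Sum>i\<in>I. f i)" "\<forall>i\<in>I. f i \<in> W i"
    and g: "y = (\<Sum>i\<in>I. g i)" "\<forall>i\<in>I. g i \<in> W i" unfolding mem_ssum_iff by blast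
  show "x + y \<in> ssum W I" unfolding mem_ssum_iff
    by (rule exI[of _ "\<lambda>i. f i + g i"]) (auto simp: f g sum.distrib subspace_add assms)
next
  fix c x assume "x \<in> ssum W I"
  then obtain f where f: "x = (\<Sum>i\<in>I. f i)" "\<forall>i\<in>I. f i \<in> W i" unfolding mem_ssum_iff by blast
  show "c *s x \<in> ssum W I" unfolding mem_ssum_iff
    by (rule exI[of _ "\<lambda>i. c *s f i"]) (auto simp: f scale_sum_right subspace_scale assms)
qed

lemma ssum_subset_subspace:
  assumes "subspace S" and "\<And>i. i \<in> I \<Longrightarrow> W i \<subseteq> S"
  shows "ssum W I \<subseteq> S"
  using assms by (auto simp: ssum_def intro!: subspace_sum)

lemma linear_image_ssum:
  assumes "Vector_Spaces.linear scale scale T" and "subspace S"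
    and "\<And>i y. i \<in> I \<Longrightarrow> y \<in> W i \<Longrightarrow> T y \<in> S" and "x \<in> ssum W I"
  shows "T x \<in> S"
  using ssum_subset_subspace[OF linear_subspace_vimage[OF assms(1,2)]] assms(3,4) by blast

lemma mem_ssum_single:
  assumes "finite I" and "i \<in> I" and "\<And>j. j \<in> I \<Longrightarrow> 0 \<in> W j" and "x \<in> W i"
  shows "x \<in> ssum W I"
  unfolding mem_ssum_iff
  by (rule exI[of _ "\<lambda>j. if j = i then x else 0"]) (use assms in \<open>auto simp: sum.delta\<close>)

lemma ssum_mono:
  assumes "finite J" and "I \<subseteq> J" and "\<And>j. j \<in> J \<Longrightarrow> subspace (W j)"
  shows "ssum W I \<subseteq> ssum W J"
  using assms by (intro ssum_subset_subspace subspace_ssum subsetI mem_ssum_single) (auto simp: subspace_0)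

lemma ssum_eigenspaces_remove:
  assumes M: "Vector_Spaces.linear scale scale M" and I: "finite I" "m \<in> I"
    and x: "x \<in> ssum (\<lambda>j. eigenspace scale M (th j)) I"
  shows "M x - th m *s x \<in> ssum (\<lambda>j. eigenspace scale M (th j)) (I - {m})"
proof -
  obtain f where x_eq: "x = (\<Sum>j\<in>I. f j)" and f: "\<forall>j\<in>I. f j \<in> eigenspace scale M (th j)"
    using x unfolding mem_ssum_iff by blast
  define g where "g j = (th j - th m) *s f j" for j
  have "M x - th m *s x = (\<Sum>j\<in>I. g j)"
    using f by (auto simp: x_eq g_def linear_sum[OF M] scale_sum_right eigenspace_def
        scale_left_diff_distrib simp flip: sum_subtractf intro!: sum.cong)
  also have "\<dots> = (\<Sum>j\<in>I - {m}. g j)"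
    using I by (simp add: sum.remove g_def)
  finally show ?thesis
    unfolding mem_ssum_iff using f subspace_eigenspace[OF M]
    by (intro exI[of _ g]) (auto simp: g_def subspace_scale)
qed

lemma eigencomponents_in_invariant_subspace:
  assumes T: "Vector_Spaces.linear scale scale T" and W: "subspace W" and TW: "T ` W \<subseteq> W"
    and "finite S" and "inj_on t S" and "\<forall>j\<in>S. T (w j) = t j *s w j" and "(\<Sum>j\<in>S. w j) \<in> W"
  shows "\<forall>j\<in>S. w j \<in> W"
  using assms(4-)
proof (induction S arbitrary: w rule: finite_induct)
  case empty
  then show ?case by simp
next
  case (insert m F)
  define w' where "w' j = (t j - t m) *s w j" for j
  \<comment> \<open>applying \<open>T - t m\<close> kills the \<open>m\<close>-component and keeps the sum inside \<open>W\<close>\<close>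
  have "T (\<Sum>j\<in>insert m F. w j) - t m *s (\<Sum>j\<in>insert m F. w j) = (\<Sum>j\<in>F. w' j)"
    using insert.prems(2) insert.hyps
    by (simp add: linear_add[OF T] linear_sum[OF T] scale_sum_right w'_def scale_left_diff_distrib
        sum_subtractf algebra_simps)
  moreover have "T (\<Sum>j\<in>insert m F. w j) - t m *s (\<Sum>j\<in>insert m F. w j) \<in> W"
    using insert.prems(3) TW W by (auto simp: subspace_diff subspace_scale)
  moreover have "\<forall>j\<in>F. T (w' j) = t j *s w' j"
    using insert.prems(2) by (simp add: w'_def linear_scale[OF T] scale_left_commute)
  moreover have "inj_on t F" using insert.prems(1) by (simp add: inj_on_insert)
  ultimately have w'_W: "\<forall>j\<in>F. w' j \<in> W" using insert.IH by simp
  have F_W: "\<forall>j\<in>F. w j \<in> W"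
  proof
    fix j assume j: "j \<in> F"
    have "t j \<noteq> t m" using insert.prems(1) insert.hyps(2) j by (auto simp: inj_on_def)
    then have "w j = inverse (t j - t m) *s w' j" by (simp add: w'_def)
    then show "w j \<in> W" using w'_W j W by (simp add: subspace_scale)
  qed
  have "w m = (\<Sum>j\<in>insert m F. w j) - (\<Sum>j\<in>F. w j)" using insert.hyps by simp
  also have "\<dots> \<in> W"
    by (rule subspace_diff[OF W insert.prems(3) subspace_sum[OF W]]) (use F_W in auto)
  finally show ?case using F_W by simp
qed

lemma ssum_eigenspaces_eq_UNIV:
  assumes M: "Vector_Spaces.linear scale scale M" and "diagonalizable scale M"
    and ord: "standard_ordering scale M T d th"
  shows "ssum (\<lambda>i. eigenspace scale M (th i)) {..d} = UNIV"
proof -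
  have sub: "subspace (ssum (\<lambda>i. eigenspace scale M (th i)) {..d})"
    by (intro subspace_ssum subspace_eigenspace[OF M])
  have "{v. \<exists>\<theta>. M v = \<theta> *s v} \<subseteq> ssum (\<lambda>i. eigenspace scale M (th i)) {..d}"
  proof
    fix v assume "v \<in> {v. \<exists>\<theta>. M v = \<theta> *s v}"
    then obtain \<theta> where v: "M v = \<theta> *s v" by blast
    show "v \<in> ssum (\<lambda>i. eigenspace scale M (th i)) {..d}"
    proof (cases "v = 0")
      case False
      then obtain i where "i \<le> d" "\<theta> = th i" using standard_ordering_eigenvalue[OF ord v] by blast
      then show ?thesis using v subspace_eigenspace[OF M]
        by (intro mem_ssum_single) (auto simp: eigenspace_def linear_0[OF M])
    qed (simp add: subspace_0[OF sub])
  qed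
  then have "span {v. \<exists>\<theta>. M v = \<theta> *s v} \<subseteq> ssum (\<lambda>i. eigenspace scale M (th i)) {..d}"
    by (rule span_minimal[OF _ sub])
  with assms(2) show ?thesis unfolding diagonalizable_def by auto
qed

lemma standard_ordering_raises_flag:
  assumes T: "Vector_Spaces.linear scale scale T" and M: "Vector_Spaces.linear scale scale M"
    and ord: "standard_ordering scale M T d th" and "m \<le> d"
    and x: "x \<in> ssum (\<lambda>j. eigenspace scale M (th j)) {..m}"
  shows "T x \<in> ssum (\<lambda>j. eigenspace scale M (th j)) {..Suc m}"
proof (rule linear_image_ssum[OF T subspace_ssum _ x])
  fix l y assume "l \<in> {..m}" and y: "y \<in> eigenspace scale M (th l)"
  then have "T y \<in> ssum (\<lambda>j. eigenspace scale M (th j)) {j. j \<le> d \<and> l \<le> j + 1 \<and> j \<le> l + 1}"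
    using standard_ordering_tridiagonal[OF ord _ y] \<open>m \<le> d\<close> by simp
  also have "\<dots> \<subseteq> ssum (\<lambda>j. eigenspace scale M (th j)) {..Suc m}"
    using \<open>l \<in> {..m}\<close> by (intro ssum_mono subspace_eigenspace[OF M]) auto
  finally show "T y \<in> ssum (\<lambda>j. eigenspace scale M (th j)) {..Suc m}" .
qed (rule subspace_eigenspace[OF M])

lemma commutation_from_eigenvectors:
  assumes T: "Vector_Spaces.linear scale scale T" and M: "Vector_Spaces.linear scale scale M"
    and span: "ssum X {..d} = UNIV"
    and T_X: "\<And>i u. i \<le> d \<Longrightarrow> u \<in> X i \<Longrightarrow> T u = t i *s u"
    and M_X: "\<And>i u. i \<le> d \<Longrightarrow> u \<in> X i \<Longrightarrow> \<alpha> *s T (M u - m i *s u) = (\<beta> * t i) *s (M u - m i *s u)"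
    and const: "\<And>i. i \<le> d \<Longrightarrow> (\<alpha> - \<beta>) * m i * t i = \<gamma>"
  shows "\<alpha> *s T (M v) - \<beta> *s M (T v) = \<gamma> *s v"
proof -
  let ?F = "\<lambda>v. \<alpha> *s T (M v) - \<beta> *s M (T v) - \<gamma> *s v"
  have sub: "subspace {v. ?F v = 0}"
  proof (rule subspace_kernel_additive)
    show "?F (x + y) = ?F x + ?F y" for x y
      by (simp add: linear_add[OF T] linear_add[OF M] scale_right_distrib algebra_simps)
    show "?F (c *s x) = c *s ?F x" for c x
      by (simp add: linear_scale[OF T] linear_scale[OF M] scale_right_diff_distrib mult.commute)
  qed
  have "X i \<subseteq> {v. ?F v = 0}" if i: "i \<le> d" for i
  proof
    fix u assume u: "u \<in> X i"
    define u' where "u' = M u - m i *s u"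
    have Mu: "M u = m i *s u + u'" by (simp add: u'_def)
    have "T (M u) = (m i * t i) *s u + T u'"
      by (simp add: Mu linear_add[OF T] linear_scale[OF T] T_X[OF i u])
    then have "\<alpha> *s T (M u) = (\<alpha> * m i * t i) *s u + (\<beta> * t i) *s u'"
      using M_X[OF i u, folded u'_def] by (simp add: scale_right_distrib mult.assoc)
    moreover have "\<beta> *s M (T u) = (\<beta> * m i * t i) *s u + (\<beta> * t i) *s u'"
      by (simp add: T_X[OF i u] linear_scale[OF M] Mu scale_right_distrib mult_ac)
    ultimately have "?F u = ((\<alpha> - \<beta>) * m i * t i - \<gamma>) *s u"
      by (simp add: scale_left_diff_distrib left_diff_distrib)
    then show "u \<in> {v. ?F v = 0}" using const[OF i] by simp
  qed
  then have "v \<in> {v. ?F v = 0}"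
    using ssum_subset_subspace[OF sub, of "{..d}" X] span by auto
  then show ?thesis by simp
qed

lemma commutation_shifts_eigenvector:
  assumes T: "Vector_Spaces.linear scale scale T" and M: "Vector_Spaces.linear scale scale M"
    and rel: "\<And>v. \<alpha> *s T (M v) - \<beta> *s M (T v) = \<gamma> *s v"
    and "\<beta> \<noteq> 0" and "\<alpha> * \<mu> = \<beta> * \<mu>'" and "\<mu> \<noteq> \<mu>'" and y: "M y = \<mu> *s y"
  obtains x z where "T y = x + z" and "M x = \<mu>' *s x" and "M z = \<mu> *s z"
proof -
  \<comment> \<open>\<open>c\<close> is chosen so that \<open>T y - c y\<close> lies in the \<open>\<mu>'\<close>-eigenspace\<close>
  define c where "c = \<gamma> / (\<beta> * (\<mu>' - \<mu>))"
  have "\<beta> *s M (T y) = (\<beta> * \<mu>') *s T y - \<gamma> *s y"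
    using rel[of y] assms(5) by (simp add: y linear_scale[OF T] algebra_simps)
  then have "inverse \<beta> *s (\<beta> *s M (T y)) = inverse \<beta> *s ((\<beta> * \<mu>') *s T y - \<gamma> *s y)"
    by simp
  then have MT: "M (T y) = \<mu>' *s T y - (\<gamma> / \<beta>) *s y"
    using \<open>\<beta> \<noteq> 0\<close> by (simp add: scale_right_diff_distrib divide_inverse_commute)
  have c: "\<gamma> / \<beta> + \<mu> * c = \<mu>' * c"
    using \<open>\<beta> \<noteq> 0\<close> \<open>\<mu> \<noteq> \<mu>'\<close> by (simp add: c_def field_simps)
  have "M (T y - c *s y) = \<mu>' *s (T y - c *s y)"
    by (simp add: linear_diff[OF M] linear_scale[OF M] MT y algebra_simps flip: c)
  moreover have "M (c *s y) = \<mu> *s (c *s y)"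
    by (simp add: linear_scale[OF M] y scale_left_commute)
  ultimately show ?thesis by (intro that[of "T y - c *s y" "c *s y"]) simp_all
qed

lemma commutation_maps_eigenspace:
  assumes T: "Vector_Spaces.linear scale scale T" and M: "Vector_Spaces.linear scale scale M"
    and rel: "\<And>v. \<alpha> *s T (M v) - \<beta> *s M (T v) = \<gamma> *s v" and "\<beta> \<noteq> 0"
    and ord: "standard_ordering scale M T' d th"
    and y: "y \<in> eigenspace scale M (th l)" and "\<alpha> * th l = \<beta> * \<mu>'" and "th l \<noteq> \<mu>'"
    and "finite J" and "l \<in> J" and J: "\<And>i. i \<le> d \<Longrightarrow> th i = \<mu>' \<Longrightarrow> i \<in> J"
  shows "T y \<in> ssum (\<lambda>j. eigenspace scale M (th j)) J"
proof -
  let ?S = "ssum (\<lambda>j. eigenspace scale M (th j)) J"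
  have sub: "subspace ?S" by (intro subspace_ssum subspace_eigenspace[OF M])
  have zero: "\<And>j. j \<in> J \<Longrightarrow> 0 \<in> eigenspace scale M (th j)"
    by (simp add: eigenspace_def linear_0[OF M])
  obtain x z where Ty: "T y = x + z" and x: "M x = \<mu>' *s x" and z: "M z = th l *s z"
    using commutation_shifts_eigenvector[OF T M rel assms(4,7,8)] y unfolding eigenspace_def by blast
  have "z \<in> ?S"
    using z \<open>finite J\<close> \<open>l \<in> J\<close> zero by (intro mem_ssum_single) (auto simp: eigenspace_def)
  moreover have "x \<in> ?S"
  proof (cases "x = 0")
    case False
    then obtain i where "i \<le> d" and "\<mu>' = th i"
      using standard_ordering_eigenvalue[OF ord x] by blast
    then show ?thesis
      using x J \<open>finite J\<close> zero by (intro mem_ssum_single[of _ i]) (auto simp: eigenspace_def)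
  qed (simp add: subspace_0[OF sub])
  ultimately show ?thesis using Ty subspace_add[OF sub] by simp
qed

lemma lowering_map_flags:
  assumes T: "Vector_Spaces.linear scale scale T" and W: "\<And>j. subspace (W j)"
    and lower: "\<And>l y. l \<le> d \<Longrightarrow> y \<in> W l \<Longrightarrow> T y \<in> ssum W {l - 1..l}"
  shows "m \<le> d \<Longrightarrow> x \<in> ssum W {..m} \<Longrightarrow> T x \<in> ssum W {..m}"
    and "x \<in> ssum W {m..d} \<Longrightarrow> T x \<in> ssum W {m - 1..d}"
proof -
  show "T x \<in> ssum W {..m}" if "m \<le> d" and x: "x \<in> ssum W {..m}"
  proof (rule linear_image_ssum[OF T subspace_ssum[OF W] _ x])
    fix l y assume "l \<in> {..m}" and "y \<in> W l"
    then have "T y \<in> ssum W {l - 1..l}" using lower \<open>m \<le> d\<close> by simp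
    also have "\<dots> \<subseteq> ssum W {..m}" using \<open>l \<in> {..m}\<close> by (intro ssum_mono W) auto
    finally show "T y \<in> ssum W {..m}" .
  qed
  show "T x \<in> ssum W {m - 1..d}" if x: "x \<in> ssum W {m..d}"
  proof (rule linear_image_ssum[OF T subspace_ssum[OF W] _ x])
    fix l y assume "l \<in> {m..d}" and "y \<in> W l"
    then have "T y \<in> ssum W {l - 1..l}" using lower by simp
    also have "\<dots> \<subseteq> ssum W {m - 1..d}" using \<open>l \<in> {m..d}\<close> by (intro ssum_mono W) auto
    finally show "T y \<in> ssum W {m - 1..d}" .
  qed
qed

lemma subspace_q_serre_kernel:
  assumes T: "Vector_Spaces.linear scale scale T" and M: "Vector_Spaces.linear scale scale M"
  shows "subspace {v. q_serre scale k T M v = 0}"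
proof (rule subspace_kernel_additive)
  show "q_serre scale k T M (x + y) = q_serre scale k T M x + q_serre scale k T M y" for x y
    by (simp add: q_serre_def linear_add[OF T] linear_add[OF M] scale_right_distrib algebra_simps)
  show "q_serre scale k T M (c *s x) = c *s q_serre scale k T M x" for c x
    by (simp add: q_serre_def linear_scale[OF T] linear_scale[OF M] scale_right_diff_distrib
        scale_right_distrib mult.commute)
qed

lemma q_serre_eigenvector:
  assumes T: "Vector_Spaces.linear scale scale T" and M: "Vector_Spaces.linear scale scale M"
    and "r \<noteq> 0" and k: "k = r + 1 + inverse r"
    and x: "T x = \<theta> *s x" and Mx: "M x \<in> ssum W J"
    and T_W: "\<And>j y. j \<in> J \<Longrightarrow> y \<in> W j \<Longrightarrow> T y = \<tau> j *s y"
    and \<tau>: "\<And>j. j \<in> J \<Longrightarrow> \<tau> j = \<theta> \<or> \<tau> j = r * \<theta> \<or> \<theta> = r * \<tau> j"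
  shows "q_serre scale k T M x = 0"
proof -
  define g where "g y = T (T (T y)) - (k * \<theta>) *s T (T y) + (k * \<theta>\<^sup>2) *s T y - (\<theta> ^ 3) *s y" for y
  have "q_serre scale k T M x = g (M x)"
    by (simp add: q_serre_def g_def x linear_scale[OF T] linear_scale[OF M]
        power2_eq_square power3_eq_cube mult_ac)
  \<comment> \<open>\<open>g\<close> is the cubic in \<open>T\<close> with roots \<open>\<theta>/r, \<theta>, r\<theta>\<close>\<close>
  have g_kernel: "subspace {y. g y = 0}"
  proof (rule subspace_kernel_additive)
    show "g (y + z) = g y + g z" for y z
      by (simp add: g_def linear_add[OF T] scale_right_distrib algebra_simps)
    show "g (c *s y) = c *s g y" for c y
      by (simp add: g_def linear_scale[OF T] scale_right_diff_distrib scale_right_distrib mult.commute)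
  qed
  have "W j \<subseteq> {y. g y = 0}" if j: "j \<in> J" for j
  proof
    fix y assume y: "y \<in> W j"
    have "g y = (\<tau> j ^ 3 - k * \<theta> * (\<tau> j)\<^sup>2 + k * \<theta>\<^sup>2 * \<tau> j - \<theta> ^ 3) *s y"
      by (simp add: g_def T_W[OF j y] linear_scale[OF T] power2_eq_square power3_eq_cube
          scale_left_diff_distrib scale_left_distrib mult_ac)
    also have "\<tau> j ^ 3 - k * \<theta> * (\<tau> j)\<^sup>2 + k * \<theta>\<^sup>2 * \<tau> j - \<theta> ^ 3 = 0"
      unfolding k by (rule cubic_with_ratio_roots[OF \<open>r \<noteq> 0\<close> \<tau>[OF j]])
    finally show "y \<in> {y. g y = 0}" by simp
  qed
  then have "ssum W J \<subseteq> {y. g y = 0}" by (rule ssum_subset_subspace[OF g_kernel])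
  with Mx \<open>q_serre scale k T M x = g (M x)\<close> show ?thesis by auto
qed

lemma q_serre_of_tridiagonal:
  assumes T: "Vector_Spaces.linear scale scale T" and M: "Vector_Spaces.linear scale scale M"
    and "r \<noteq> 0" and k: "k = r + 1 + inverse r"
    and span: "ssum X {..d} = UNIV"
    and T_X: "\<And>i x. i \<le> d \<Longrightarrow> x \<in> X i \<Longrightarrow> T x = t i *s x"
    and t_step: "\<And>i. i < d \<Longrightarrow> t (Suc i) = r * t i"
    and M_X: "\<And>i x. i \<le> d \<Longrightarrow> x \<in> X i \<Longrightarrow> M x \<in> ssum X {j. j \<le> d \<and> i \<le> j + 1 \<and> j \<le> i + 1}"
  shows "q_serre scale k T M v = 0"
proof -
  have "X i \<subseteq> {v. q_serre scale k T M v = 0}" if i: "i \<le> d" for i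
  proof
    fix x assume x: "x \<in> X i"
    have "t j = t i \<or> t j = r * t i \<or> t i = r * t j"
      if j: "j \<in> {j. j \<le> d \<and> i \<le> j + 1 \<and> j \<le> i + 1}" for j
    proof -
      consider "j = i" | "j = Suc i" | "Suc j = i" using j by force
      then show ?thesis by cases (use i j t_step in auto)
    qed
    then show "x \<in> {v. q_serre scale k T M v = 0}"
      using T_X i x M_X[OF i x]
      by (auto intro: q_serre_eigenvector[OF T M \<open>r \<noteq> 0\<close> k, where \<tau> = t])
  qed
  then show ?thesis
    using ssum_subset_subspace[OF subspace_q_serre_kernel[OF T M, of k], of "{..d}" X] span by auto
qed

lemma q_serre_of_standard_ordering:
  assumes T: "Vector_Spaces.linear scale scale T" and M: "Vector_Spaces.linear scale scale M"
    and "diagonalizable scale T" and ord: "standard_ordering scale T M d th"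
    and "r \<noteq> 0" and "\<And>i. i < d \<Longrightarrow> th (Suc i) = r * th i"
  shows "q_serre scale (r + 1 + inverse r) T M v = 0"
  using assms ssum_eigenspaces_eq_UNIV[OF T assms(3) ord] standard_ordering_tridiagonal[OF ord]
  by (intro q_serre_of_tridiagonal[where X = "\<lambda>i. eigenspace scale T (th i)" and t = th])
    (auto simp: eigenspace_def)

lemma decomposition_inter:
  assumes dec: "decomposition scale U d" and "j \<le> d" "l \<le> d" "j \<noteq> l"
    and "x \<in> U j" "x \<in> U l"
  shows "x = 0"
proof -
  define f where "f i = (if i = j then x else 0) + (if i = l then - x else 0)" for i
  have "\<forall>i\<le>d. f i \<in> U i"
    using dec assms by (auto simp: f_def decomposition_def subspace_0 subspace_neg)
  moreover have "(\<Sum>i\<le>d. f i) = 0"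
    using assms by (simp add: f_def sum.distrib)
  ultimately have "f j = 0" using dec \<open>j \<le> d\<close> unfolding decomposition_def by blast
  then show ?thesis using assms by (simp add: f_def)
qed

lemma decomposition_neighbours:
  assumes dec: "decomposition scale U d"
    and U_eq: "\<And>i. i \<le> d \<Longrightarrow> U i = P i \<inter> Q i"
    and P_mono: "\<And>i j. i \<le> j \<Longrightarrow> P i \<subseteq> P j" and Q_antimono: "\<And>i j. i \<le> j \<Longrightarrow> Q j \<subseteq> Q i"
    and P: "\<And>i. subspace (P i)" and Q: "\<And>i. subspace (Q i)"
    and T: "Vector_Spaces.linear scale scale T"
    and TP: "\<And>i. i \<le> d \<Longrightarrow> T ` P i \<subseteq> P i" and TQ: "\<And>i. i \<le> d \<Longrightarrow> T ` Q i \<subseteq> Q i"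
    and T_U: "\<And>i u. i \<le> d \<Longrightarrow> u \<in> U i \<Longrightarrow> T u = t i *s u" and t: "inj_on t {..d}"
    and i: "i \<le> d" and x_P: "i < d \<Longrightarrow> x \<in> P (Suc i)" and x_Q: "0 < i \<Longrightarrow> x \<in> Q (i - 1)"
  shows "x \<in> ssum U {j. j \<le> d \<and> i \<le> j + 1 \<and> j \<le> i + 1}"
proof -
  have "x \<in> ssum U {..d}" using dec by (simp add: decomposition_def)
  then obtain w where x_eq: "x = (\<Sum>j\<le>d. w j)" and w: "\<And>j. j \<le> d \<Longrightarrow> w j \<in> U j"
    unfolding mem_ssum_iff by auto
  have Tw: "\<forall>j\<in>{..d}. T (w j) = t j *s w j" using T_U w by auto
  have w_P: "\<forall>j\<in>{..d}. w j \<in> P (Suc i)" if "i < d"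
    using that x_P x_eq t Tw by (intro eigencomponents_in_invariant_subspace[OF T P TP]) auto
  have w_Q: "\<forall>j\<in>{..d}. w j \<in> Q (i - 1)" if "0 < i"
    using that i x_Q x_eq t Tw by (intro eigencomponents_in_invariant_subspace[OF T Q TQ]) auto
  \<comment> \<open>a component outside the neighbours lies in two different \<open>U\<close>'s\<close>
  have other: "w j = 0" if "j \<le> d" "l \<le> d" "l \<noteq> j" "w j \<in> P l" "w j \<in> Q l" for j l
    using decomposition_inter[OF dec, of j l] w[of j] U_eq that by auto
  have "x = (\<Sum>j\<in>{j. j \<le> d \<and> i \<le> j + 1 \<and> j \<le> i + 1}. w j)"
    unfolding x_eq
  proof (intro sum.mono_neutral_right ballI)
    fix j assume "j \<in> {..d} - {j. j \<le> d \<and> i \<le> j + 1 \<and> j \<le> i + 1}"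
    then have j: "j \<le> d" and far: "Suc i < j \<or> Suc j < i" by auto
    have "w j \<in> P j" and "w j \<in> Q j" using w[OF j] U_eq[OF j] by auto
    show "w j = 0"
    proof (cases "Suc i < j")
      case True
      then have "P (Suc i) \<subseteq> P (j - 1)" by (intro P_mono) simp
      then have "w j \<in> P (j - 1)" using w_P True j by auto
      moreover have "w j \<in> Q (j - 1)" using \<open>w j \<in> Q j\<close> Q_antimono[of "j - 1" j] by auto
      ultimately show ?thesis using True j by (intro other[of j "j - 1"]) auto
    next
      case False
      then have "Suc j < i" using far by simp
      then have "Q (i - 1) \<subseteq> Q (Suc j)" by (intro Q_antimono) simp
      then have "w j \<in> Q (Suc j)" using w_Q \<open>Suc j < i\<close> j by auto
      moreover have "w j \<in> P (Suc j)" using \<open>w j \<in> P j\<close> P_mono[of j "Suc j"] by auto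
      ultimately show ?thesis using \<open>Suc j < i\<close> i by (intro other[of j "Suc j"]) auto
    qed
  qed auto
  then show ?thesis unfolding mem_ssum_iff using w by auto
qed

end

locale q_split_pair = vector_space s
  for s :: "'a::field \<Rightarrow> 'v::ab_group_add \<Rightarrow> 'v" +
  fixes A As B Bs :: "'v \<Rightarrow> 'v" and q a as b bs :: 'a and d :: nat
  assumes linear_A: "Vector_Spaces.linear s s A" and linear_As: "Vector_Spaces.linear s s As"
    and linear_B: "Vector_Spaces.linear s s B" and linear_Bs: "Vector_Spaces.linear s s Bs"
    and q_nonzero: "q \<noteq> 0" and q_not_root: "\<forall>n::nat. 0 < n \<longrightarrow> q ^ n \<noteq> 1"
    and ord_A: "standard_ordering s A As d (\<lambda>i. a * q powi (2 * int i - int d))"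
    and ord_As: "standard_ordering s As A d (\<lambda>i. as * q powi (int d - 2 * int i))"
    and a_nonzero: "a \<noteq> 0" and as_nonzero: "as \<noteq> 0"
    and b_nonzero: "b \<noteq> 0" and bs_nonzero: "bs \<noteq> 0"
    and decomposition_B: "decomposition s (\<lambda>i.
        ssum (\<lambda>j. eigenspace s As (as * q powi (int d - 2 * int j))) {..i} \<inter>
        ssum (\<lambda>j. eigenspace s A (a * q powi (2 * int j - int d))) {..d - i}) d"
    and decomposition_Bs: "decomposition s (\<lambda>i.
        ssum (\<lambda>j. eigenspace s As (as * q powi (int d - 2 * int j))) {d - i..d} \<inter>
        ssum (\<lambda>j. eigenspace s A (a * q powi (2 * int j - int d))) {i..d}) d"
    and B_eigen: "\<forall>i\<le>d. \<forall>v \<in>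
        ssum (\<lambda>j. eigenspace s As (as * q powi (int d - 2 * int j))) {..i} \<inter>
        ssum (\<lambda>j. eigenspace s A (a * q powi (2 * int j - int d))) {..d - i}.
          B v = s (b * q powi (2 * int i - int d)) v"
    and Bs_eigen: "\<forall>i\<le>d. \<forall>v \<in>
        ssum (\<lambda>j. eigenspace s As (as * q powi (int d - 2 * int j))) {d - i..d} \<inter>
        ssum (\<lambda>j. eigenspace s A (a * q powi (2 * int j - int d))) {i..d}.
          Bs v = s (bs * q powi (int d - 2 * int i)) v"
begin

interpretation vector_space_pair s s ..

abbreviation E :: "nat \<Rightarrow> 'v set" where
  "E j \<equiv> eigenspace s A (a * q powi (2 * int j - int d))"

abbreviation Es :: "nat \<Rightarrow> 'v set" where
  "Es j \<equiv> eigenspace s As (as * q powi (int d - 2 * int j))"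

abbreviation U :: "nat \<Rightarrow> 'v set" where
  "U i \<equiv> ssum Es {..i} \<inter> ssum E {..d - i}"

lemma subspace_E: "subspace (E j)" and subspace_Es: "subspace (Es j)"
  by (simp_all add: subspace_eigenspace linear_A linear_As)

lemma q_powi_eq_iff: "q powi k = q powi l \<longleftrightarrow> k = l"
  using power_int_inj[OF q_nonzero q_not_root] .

lemma reflected_flags:
  assumes "m \<le> d"
  shows "ssum (\<lambda>j. eigenspace s A (a * inverse q powi (2 * int j - int d))) {m..d} = ssum E {..d - m}"
    and "ssum (\<lambda>j. eigenspace s A (a * inverse q powi (2 * int j - int d))) {..m} = ssum E {d - m..d}"
    and "ssum (\<lambda>j. eigenspace s As (as * inverse q powi (int d - 2 * int j))) {m..d} = ssum Es {..d - m}"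
    and "ssum (\<lambda>j. eigenspace s As (as * inverse q powi (int d - 2 * int j))) {..m} = ssum Es {d - m..d}"
  using assms by (simp_all add: ssum_reflect_flags power_int_reflect)

lemma reversed: "q_split_pair s A As Bs B (inverse q) a as bs b d"
proof (intro q_split_pair.intro[OF vector_space_axioms] q_split_pair_axioms.intro)
  show "inverse q \<noteq> 0" using q_nonzero by simp
  show "\<forall>n::nat. 0 < n \<longrightarrow> inverse q ^ n \<noteq> 1" using q_not_root by (simp add: power_inverse)
  show "standard_ordering s A As d (\<lambda>i. a * inverse q powi (2 * int i - int d))"
    by (rule standard_ordering_reverse[OF ord_A]) (simp add: power_int_reflect)
  show "standard_ordering s As A d (\<lambda>i. as * inverse q powi (int d - 2 * int i))"
    by (rule standard_ordering_reverse[OF ord_As]) (simp add: power_int_reflect)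
  show "decomposition s (\<lambda>i.
        ssum (\<lambda>j. eigenspace s As (as * inverse q powi (int d - 2 * int j))) {..i} \<inter>
        ssum (\<lambda>j. eigenspace s A (a * inverse q powi (2 * int j - int d))) {..d - i}) d"
    using decomposition_Bs by (subst decomposition_cong) (simp_all add: reflected_flags)
  show "decomposition s (\<lambda>i.
        ssum (\<lambda>j. eigenspace s As (as * inverse q powi (int d - 2 * int j))) {d - i..d} \<inter>
        ssum (\<lambda>j. eigenspace s A (a * inverse q powi (2 * int j - int d))) {i..d}) d"
    using decomposition_B by (subst decomposition_cong) (simp_all add: reflected_flags)
  show "\<forall>i\<le>d. \<forall>v \<in>
        ssum (\<lambda>j. eigenspace s As (as * inverse q powi (int d - 2 * int j))) {..i} \<inter>
        ssum (\<lambda>j. eigenspace s A (a * inverse q powi (2 * int j - int d))) {..d - i}.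
          Bs v = s (bs * inverse q powi (2 * int i - int d)) v"
    using Bs_eigen by (simp add: reflected_flags) (simp add: power_int_inverse_neg)
  show "\<forall>i\<le>d. \<forall>v \<in>
        ssum (\<lambda>j. eigenspace s As (as * inverse q powi (int d - 2 * int j))) {d - i..d} \<inter>
        ssum (\<lambda>j. eigenspace s A (a * inverse q powi (2 * int j - int d))) {i..d}.
          B v = s (b * inverse q powi (int d - 2 * int i)) v"
    using B_eigen by (simp add: reflected_flags) (simp add: power_int_inverse_neg)
qed (simp_all add: linear_A linear_As linear_B linear_Bs a_nonzero as_nonzero b_nonzero bs_nonzero)

lemma B_on_U: "i \<le> d \<Longrightarrow> u \<in> U i \<Longrightarrow> B u = s (b * q powi (2 * int i - int d)) u"
  using B_eigen by blast

lemma span_U: "ssum U {..d} = UNIV"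
  using decomposition_B by (simp add: decomposition_def)

lemma A_maps_U:
  assumes "i \<le> d" and u: "u \<in> U i"
  shows "A u - s (a * q powi (2 * int (d - i) - int d)) u \<in> (if i < d then U (Suc i) else {0})"
proof -
  let ?w = "A u - s (a * q powi (2 * int (d - i) - int d)) u"
  have "?w \<in> ssum E ({..d - i} - {d - i})"
    using u by (intro ssum_eigenspaces_remove linear_A) auto
  also have "{..d - i} - {d - i} = {..<d - i}" by auto
  finally have w_E: "?w \<in> ssum E {..<d - i}" .
  show ?thesis
  proof (cases "i < d")
    case True
    have "A u \<in> ssum Es {..Suc i}"
      using u True by (intro standard_ordering_raises_flag[OF linear_A linear_As ord_As]) auto
    moreover have "u \<in> ssum Es {..Suc i}"
      using u ssum_mono[of "{..Suc i}" "{..i}" Es] subspace_Es by auto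
    ultimately have "?w \<in> ssum Es {..Suc i}"
      by (intro subspace_diff subspace_scale subspace_ssum subspace_Es)
    moreover have "{..<d - i} = {..d - Suc i}" using True by auto
    ultimately show ?thesis using w_E True by auto
  qed (use w_E in simp)
qed

lemma As_maps_U:
  assumes "i \<le> d" and u: "u \<in> U i"
  shows "As u - s (as * q powi (int d - 2 * int i)) u \<in> (if 0 < i then U (i - 1) else {0})"
proof -
  let ?w = "As u - s (as * q powi (int d - 2 * int i)) u"
  have "?w \<in> ssum Es ({..i} - {i})"
    using u by (intro ssum_eigenspaces_remove linear_As) auto
  also have "{..i} - {i} = {..<i}" by auto
  finally have w_Es: "?w \<in> ssum Es {..<i}" .
  show ?thesis
  proof (cases "0 < i")
    case True
    have "As u \<in> ssum E {..Suc (d - i)}"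
      using u by (intro standard_ordering_raises_flag[OF linear_As linear_A ord_A]) auto
    moreover have "u \<in> ssum E {..Suc (d - i)}"
      using u ssum_mono[of "{..Suc (d - i)}" "{..d - i}" E] subspace_E by auto
    ultimately have "?w \<in> ssum E {..Suc (d - i)}"
      by (intro subspace_diff subspace_scale subspace_ssum subspace_E)
    moreover have "Suc (d - i) = d - (i - 1)" and "{..<i} = {..i - 1}"
      using True \<open>i \<le> d\<close> by auto
    ultimately show ?thesis using w_Es True by auto
  qed (use w_Es in simp)
qed

lemma B_A_commutation: "s (inverse q) (B (A v)) - s q (A (B v)) = s ((inverse q - q) * a * b) v"
proof (rule commutation_from_eigenvectors[OF linear_B linear_A span_U B_on_U])
  fix i u assume i: "i \<le> d" and u: "u \<in> U i"
  let ?w = "A u - s (a * q powi (2 * int (d - i) - int d)) u"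
  show "s (inverse q) (B ?w) = s (q * (b * q powi (2 * int i - int d))) ?w"
  proof (cases "i < d")
    case True
    then have "B ?w = s (b * q powi (2 * int (Suc i) - int d)) ?w"
      using A_maps_U[OF i u] by (intro B_on_U) auto
    also have "b * q powi (2 * int (Suc i) - int d) = q\<^sup>2 * (b * q powi (2 * int i - int d))"
      using power_int_step(1)[OF q_nonzero] by simp
    finally show ?thesis
      using q_nonzero by (simp add: power2_eq_square)
  qed (use A_maps_U[OF i u] linear_0[OF linear_B] in simp)
next
  fix i assume "i \<le> d"
  then show "(inverse q - q) * (a * q powi (2 * int (d - i) - int d)) * (b * q powi (2 * int i - int d))
      = (inverse q - q) * a * b"
    using power_int_reflect_mult(1)[OF q_nonzero] by (simp add: mult_ac)
qed

lemma B_As_commutation: "s q (B (As v)) - s (inverse q) (As (B v)) = s ((q - inverse q) * as * b) v"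
proof (rule commutation_from_eigenvectors[OF linear_B linear_As span_U B_on_U])
  fix i u assume i: "i \<le> d" and u: "u \<in> U i"
  let ?w = "As u - s (as * q powi (int d - 2 * int i)) u"
  show "s q (B ?w) = s (inverse q * (b * q powi (2 * int i - int d))) ?w"
  proof (cases "0 < i")
    case True
    then have "B ?w = s (b * q powi (2 * int (i - 1) - int d)) ?w"
      using As_maps_U[OF i u] i by (intro B_on_U) auto
    moreover have "b * q powi (2 * int i - int d) = q\<^sup>2 * (b * q powi (2 * int (i - 1) - int d))"
      using True power_int_step(1)[OF q_nonzero, of "i - 1" d] by simp
    then have "inverse q * (b * q powi (2 * int i - int d)) = q * (b * q powi (2 * int (i - 1) - int d))"
      using q_nonzero by (simp add: power2_eq_square field_simps)
    ultimately show ?thesis by (metis scale_scale)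
  qed (use As_maps_U[OF i u] linear_0[OF linear_B] in simp)
next
  fix i assume "i \<le> d"
  then show "(q - inverse q) * (as * q powi (int d - 2 * int i)) * (b * q powi (2 * int i - int d))
      = (q - inverse q) * as * b"
    using power_int_reflect_mult(2)[OF q_nonzero] by (simp add: mult_ac)
qed

lemma B_lowers_E:
  assumes "y \<in> E l"
  shows "B y \<in> ssum E {l - 1..l}"
proof (rule commutation_maps_eigenspace[OF linear_B linear_A B_A_commutation q_nonzero ord_A assms,
      where \<mu>' = "a * q powi (2 * int l - int d - 2)"])
  show "inverse q * (a * q powi (2 * int l - int d)) = q * (a * q powi (2 * int l - int d - 2))"
    using power_int_step(3)[OF q_nonzero] by (simp add: mult.left_commute)
  show "a * q powi (2 * int l - int d) \<noteq> a * q powi (2 * int l - int d - 2)"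
    by (simp add: q_powi_eq_iff a_nonzero)
  show "i \<in> {l - 1..l}" if "a * q powi (2 * int i - int d) = a * q powi (2 * int l - int d - 2)" for i
    using that by (simp add: q_powi_eq_iff a_nonzero)
qed auto

lemma B_lowers_Es:
  assumes "y \<in> Es l"
  shows "B y \<in> ssum Es {l - 1..l}"
proof (rule commutation_maps_eigenspace[OF linear_B linear_As B_As_commutation _ ord_As assms,
      where \<mu>' = "as * q powi (int d - 2 * int l + 2)"])
  show "q * (as * q powi (int d - 2 * int l)) = inverse q * (as * q powi (int d - 2 * int l + 2))"
    using power_int_step(4)[OF q_nonzero] by (simp add: mult.left_commute)
  show "as * q powi (int d - 2 * int l) \<noteq> as * q powi (int d - 2 * int l + 2)"
    by (simp add: q_powi_eq_iff as_nonzero)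
  show "i \<in> {l - 1..l}" if "as * q powi (int d - 2 * int i) = as * q powi (int d - 2 * int l + 2)" for i
    using that by (simp add: q_powi_eq_iff as_nonzero)
qed (use q_nonzero in auto)

lemma B_maps_flags:
  shows "m \<le> d \<Longrightarrow> x \<in> ssum E {..m} \<Longrightarrow> B x \<in> ssum E {..m}"
    and "x \<in> ssum E {m..d} \<Longrightarrow> B x \<in> ssum E {m - 1..d}"
    and "m \<le> d \<Longrightarrow> x \<in> ssum Es {..m} \<Longrightarrow> B x \<in> ssum Es {..m}"
    and "x \<in> ssum Es {m..d} \<Longrightarrow> B x \<in> ssum Es {m - 1..d}"
  using lowering_map_flags[OF linear_B subspace_E B_lowers_E]
    lowering_map_flags[OF linear_B subspace_Es B_lowers_Es] by blast+

lemma Bs_raises_flags: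
  assumes "m < d"
  shows "x \<in> ssum E {..m} \<Longrightarrow> Bs x \<in> ssum E {..Suc m}"
    and "x \<in> ssum Es {..m} \<Longrightarrow> Bs x \<in> ssum Es {..Suc m}"
proof -
  \<comment> \<open>in the reversed pair \<open>B\<^sup>*\<close> plays the role of \<open>B\<close>, and its upper flags are our lower ones\<close>
  interpret rev: q_split_pair s A As Bs B "inverse q" a as bs b d by (rule reversed)
  have "d - (d - m) = m" and "d - (d - m - 1) = Suc m" using assms by auto
  then show "x \<in> ssum E {..m} \<Longrightarrow> Bs x \<in> ssum E {..Suc m}"
    and "x \<in> ssum Es {..m} \<Longrightarrow> Bs x \<in> ssum Es {..Suc m}"
    using rev.B_maps_flags(2,4)[of x "d - m"] by (simp_all add: reflected_flags)
qed

lemma q_serre_B_Bs: "q_serre s (qint3 q) B Bs v = 0"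
proof (rule q_serre_of_tridiagonal[OF linear_B linear_Bs _ _ span_U B_on_U])
  show "q\<^sup>2 \<noteq> 0" using q_nonzero by simp
  show "qint3 q = q\<^sup>2 + 1 + inverse (q\<^sup>2)"
    using q_nonzero q_not_root by (intro qint3_eq) auto
  show "b * q powi (2 * int (Suc i) - int d) = q\<^sup>2 * (b * q powi (2 * int i - int d))" for i
    using power_int_step(1)[OF q_nonzero] by simp
  fix i x assume i: "i \<le> d" and x: "x \<in> U i"
  show "Bs x \<in> ssum U {j. j \<le> d \<and> i \<le> j + 1 \<and> j \<le> i + 1}"
  proof (rule decomposition_neighbours[OF decomposition_B _ _ _ _ _ linear_B, where
        P = "\<lambda>i. ssum Es {..i}" and Q = "\<lambda>i. ssum E {..d - i}" and t = "\<lambda>i. b * q powi (2 * int i - int d)"])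
    show "ssum Es {..j} \<subseteq> ssum Es {..l}" and "ssum E {..d - l} \<subseteq> ssum E {..d - j}"
      if "j \<le> l" for j l
      using that by (intro ssum_mono subspace_E subspace_Es; auto)+
    show "B ` ssum Es {..j} \<subseteq> ssum Es {..j}" and "B ` ssum E {..d - j} \<subseteq> ssum E {..d - j}"
      if "j \<le> d" for j
      using that B_maps_flags(1,3) by auto
    show "inj_on (\<lambda>i. b * q powi (2 * int i - int d)) {..d}"
      by (rule inj_onI) (simp add: q_powi_eq_iff b_nonzero)
    show "Bs x \<in> ssum Es {..Suc i}" if "i < d"
      using Bs_raises_flags(2)[OF that] x by simp
    show "Bs x \<in> ssum E {..d - (i - 1)}" if "0 < i"
      using Bs_raises_flags(1)[of "d - i"] x that i by (simp add: Suc_diff_le)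
  qed (auto simp: i B_on_U subspace_ssum subspace_E subspace_Es)
qed

lemma q_serre_Bs_B: "q_serre s (qint3 q) Bs B v = 0"
proof -
  interpret rev: q_split_pair s A As Bs B "inverse q" a as bs b d by (rule reversed)
  show ?thesis using rev.q_serre_B_Bs by (simp add: qint3_inverse)
qed

end

theorem theorem12p1:
  fixes s :: "'a::field \<Rightarrow> 'v::ab_group_add \<Rightarrow> 'v"
    and A As B Bs :: "'v \<Rightarrow> 'v"
    and q a as b bs :: 'a and d :: nat
  assumes K: "alg_closed TYPE('a)"
    and vs: "vector_space s"
    and fin: "\<exists>S. finite S \<and> module.span s S = UNIV"
    and nz: "(UNIV :: 'v set) \<noteq> {0}"
    and q0: "q \<noteq> 0" and qroot: "\<forall>n::nat. 0 < n \<longrightarrow> q ^ n \<noteq> 1"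
    and TD: "tridiagonal_pair s A As"
    and ordA: "standard_ordering s A As d (\<lambda>i. a * q powi (2 * int i - int d))"
    and ordAs: "standard_ordering s As A d (\<lambda>i. as * q powi (int d - 2 * int i))"
    and a0: "a \<noteq> 0" and as0: "as \<noteq> 0" and b0: "b \<noteq> 0" and bs0: "bs \<noteq> 0"
    and dec1: "decomposition s (\<lambda>i.
        ssum (\<lambda>j. eigenspace s As (as * q powi (int d - 2 * int j))) {..i} \<inter>
        ssum (\<lambda>j. eigenspace s A (a * q powi (2 * int j - int d))) {..d - i}) d"
    and dec2: "decomposition s (\<lambda>i.
        ssum (\<lambda>j. eigenspace s As (as * q powi (int d - 2 * int j))) {d - i..d} \<inter>
        ssum (\<lambda>j. eigenspace s A (a * q powi (2 * int j - int d))) {i..d}) d"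
    and Blin: "Vector_Spaces.linear s s B"
    and Bdef: "\<forall>i\<le>d. \<forall>v \<in>
        ssum (\<lambda>j. eigenspace s As (as * q powi (int d - 2 * int j))) {..i} \<inter>
        ssum (\<lambda>j. eigenspace s A (a * q powi (2 * int j - int d))) {..d - i}.
          B v = s (b * q powi (2 * int i - int d)) v"
    and Bslin: "Vector_Spaces.linear s s Bs"
    and Bsdef: "\<forall>i\<le>d. \<forall>v \<in>
        ssum (\<lambda>j. eigenspace s As (as * q powi (int d - 2 * int j))) {d - i..d} \<inter>
        ssum (\<lambda>j. eigenspace s A (a * q powi (2 * int j - int d))) {i..d}.
          Bs v = s (bs * q powi (int d - 2 * int i)) v"
  shows "(\<forall>v. A (A (A (As v))) - s (qint3 q) (A (A (As (A v))))
             + s (qint3 q) (A (As (A (A v)))) - As (A (A (A v))) = 0) \<and>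
    (\<forall>v. As (As (As (A v))) - s (qint3 q) (As (As (A (As v))))
             + s (qint3 q) (As (A (As (As v)))) - A (As (As (As v))) = 0) \<and>
    (\<forall>v. B (B (B (Bs v))) - s (qint3 q) (B (B (Bs (B v))))
             + s (qint3 q) (B (Bs (B (B v)))) - Bs (B (B (B v))) = 0) \<and>
    (\<forall>v. Bs (Bs (Bs (B v))) - s (qint3 q) (Bs (Bs (B (Bs v))))
             + s (qint3 q) (Bs (B (Bs (Bs v)))) - B (Bs (Bs (Bs v))) = 0)"
proof -
  interpret vector_space s by (rule vs)
  have lin: "Vector_Spaces.linear s s A" "Vector_Spaces.linear s s As"
    and diag: "diagonalizable s A" "diagonalizable s As"
    using TD by (simp_all add: tridiagonal_pair_def)
  interpret q_split_pair s A As B Bs q a as b bs d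
    by (intro q_split_pair.intro[OF vs] q_split_pair_axioms.intro) (fact | rule lin)+
  have q2: "q\<^sup>2 \<noteq> 0" "q\<^sup>2 \<noteq> 1" using q0 qroot by auto
  have "q_serre s (q\<^sup>2 + 1 + inverse (q\<^sup>2)) A As v = 0" for v
    using q2 power_int_step(1)[OF q0]
    by (intro q_serre_of_standard_ordering[OF lin diag(1) ordA]) (simp_all add: mult.left_commute)
  moreover have "q_serre s (inverse (q\<^sup>2) + 1 + inverse (inverse (q\<^sup>2))) As A v = 0" for v
    using q2 power_int_step(2)[OF q0]
    by (intro q_serre_of_standard_ordering[OF lin(2,1) diag(2) ordAs]) (simp_all add: field_simps)
  moreover have "qint3 q = q\<^sup>2 + 1 + inverse (q\<^sup>2)" by (rule qint3_eq[OF q0 q2(2)])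
  ultimately show ?thesis
    using q_serre_B_Bs q_serre_Bs_B unfolding q_serre_def by (simp add: add_ac)
qed

end
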